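(* Let $\hat A_1,\dots,\hat A_n\in\mathcal P_m$, $\hat T_{ij}:=\hat A_i^\top\hat A_j$, and let the $T_{ij}$ be generated by the noise model: for $i<j$, $[T_{ij}]_{p,q}=1-Z_{ijpq}^2$ if $[\hat T_{ij}]_{p,q}=1$, $[T_{ij}]_{p,q}=Z_{ijpq}^2$ if $[\hat T_{ij}]_{p,q}=0$, and $T_{ij}=T_{ji}^\top$ for $i>j$, with independent $Z_{ijpq}\sim\mathcal N(0,\eta_{ij})$. Let $\gamma>0$, $\delta>0$, and suppose $n\le m^{\gamma}$, $m\ge 2^{2/(4\gamma+\delta)}$, and $\eta_{ij}\le\min\!\big(\frac1{10},\frac{1}{2(2+4\gamma+\delta)\ln m+2}\big)$ for all $i<j$. Then with probability at least $1-m^{-\delta}$, simultaneously for all $i\ne j$, $\hat T_{ij}$ is the unique maximizer of $\operatorname{tr}(P^\top T_{ij})$ over $P\in\mathcal P_m$ (so the Pairwise Alignment method recovers matrices $P_{ij}=\hat A_i^\top\hat A_j$).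
   Context: $\mathcal P_m$ denotes the set of $m\times m$ permutation matrices; $\mathcal N(0,\eta)$ is the Gaussian with mean $0$ and variance $\eta$. The Pairwise Alignment method sets $P_{ij}=\arg\max_{P\in\mathcal P_m}\operatorname{tr}(P^\top T_{ij})$ for each pair $i,j$. *)

theory Defs
  imports "HOL-Probability.Probability"
begin

text \<open>m x m real matrices are represented as functions nat => nat => real;
  only entries with indices < m are meaningful. Indices run over 0..<m.\<close>

definition mtransp :: "(nat \<Rightarrow> nat \<Rightarrow> real) \<Rightarrow> nat \<Rightarrow> nat \<Rightarrow> real" where
  "mtransp X = (\<lambda>p q. X q p)"

definition mmult :: "nat \<Rightarrow> (nat \<Rightarrow> nat \<Rightarrow> real) \<Rightarrow> (nat \<Rightarrow> nat \<Rightarrow> real) \<Rightarrow> nat \<Rightarrow> nat \<Rightarrow> real" where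
  "mmult m X Y = (\<lambda>p q. \<Sum>k<m. X p k * Y k q)"

definition mtrace :: "nat \<Rightarrow> (nat \<Rightarrow> nat \<Rightarrow> real) \<Rightarrow> real" where
  "mtrace m X = (\<Sum>p<m. X p p)"

definition perm_mats :: "nat \<Rightarrow> (nat \<Rightarrow> nat \<Rightarrow> real) set" where
  "perm_mats m = {P. \<exists>\<sigma>. \<sigma> permutes {..<m} \<and>
      P = (\<lambda>p q. if p < m \<and> q < m \<and> \<sigma> p = q then 1 else 0)}"

definition gauss :: "real \<Rightarrow> real measure" where
  "gauss \<eta> = (if \<eta> = 0 then return borel 0 else density lborel (normal_density 0 (sqrt \<eta>)))"

definition hatT :: "nat \<Rightarrow> (nat \<Rightarrow> nat \<Rightarrow> nat \<Rightarrow> real) \<Rightarrow> nat \<Rightarrow> nat \<Rightarrow> nat \<Rightarrow> nat \<Rightarrow> real" where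
  "hatT m A i j = mmult m (mtransp (A i)) (A j)"

definition noisyT_upper :: "nat \<Rightarrow> (nat \<Rightarrow> nat \<Rightarrow> nat \<Rightarrow> real) \<Rightarrow> (nat \<Rightarrow> nat \<Rightarrow> nat \<Rightarrow> nat \<Rightarrow> real)
    \<Rightarrow> nat \<Rightarrow> nat \<Rightarrow> nat \<Rightarrow> nat \<Rightarrow> real" where
  "noisyT_upper m A z i j p q =
     (if hatT m A i j p q = 1 then 1 - (z i j p q)\<^sup>2 else (z i j p q)\<^sup>2)"

definition noisyT :: "nat \<Rightarrow> (nat \<Rightarrow> nat \<Rightarrow> nat \<Rightarrow> real) \<Rightarrow> (nat \<Rightarrow> nat \<Rightarrow> nat \<Rightarrow> nat \<Rightarrow> real)
    \<Rightarrow> nat \<Rightarrow> nat \<Rightarrow> nat \<Rightarrow> nat \<Rightarrow> real" where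
  "noisyT m A z i j =
     (if i < j then noisyT_upper m A z i j else mtransp (noisyT_upper m A z j i))"

definition unique_maximizer :: "nat \<Rightarrow> (nat \<Rightarrow> nat \<Rightarrow> real) \<Rightarrow> (nat \<Rightarrow> nat \<Rightarrow> real) \<Rightarrow> bool" where
  "unique_maximizer m T P0 \<longleftrightarrow> P0 \<in> perm_mats m \<and>
     (\<forall>P \<in> perm_mats m. P \<noteq> P0 \<longrightarrow>
        mtrace m (mmult m (mtransp P) T) < mtrace m (mmult m (mtransp P0) T))"

end

theory Submission
  imports Defs
begin

text \<open>For \<open>i < j\<close>, \<open>hatT i j\<close> is the permutation matrix of some \<open>\<rho>\<close>, and in row \<open>k\<close> of \<open>T i j\<close> the
  entry at column \<open>\<rho> k\<close> is \<open>1 - Z(k, \<rho> k)\<^sup>2\<close> while every other entry is \<open>Z(k, q)\<^sup>2\<close>. So \<open>\<rho>\<close> wins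
  every row strictly as soon as \<open>Z(k, \<rho> k)\<^sup>2 + Z(k, q)\<^sup>2 < 1\<close> for all \<open>q \<noteq> \<rho> k\<close>, and a
  permutation winning every row is the unique maximiser of the trace; the case \<open>i > j\<close> follows by
  transposition. The squared norm of two independent \<open>N(0, \<eta>)\<close> variables is exponentially
  distributed, so it is at least 1 with probability \<open>exp (-1 / (2\<eta>))\<close>, which the bound on \<open>\<eta>\<close>
  makes at most \<open>m powr -(2 + 4\<gamma> + \<delta>)\<close>. A union bound over the at most
  \<open>n\<^sup>2 m\<^sup>2 \<le> m powr (2\<gamma> + 2)\<close> such pairs finishes the proof.\<close>

section \<open>The planar Gaussian outside the unit disc\<close>

lemma nn_integral_lborel_even:
  fixes f :: "real \<Rightarrow> ennreal"
  assumes [measurable]: "f \<in> borel_measurable borel" and even: "\<And>x. f (-x) = f x"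
  shows "(\<integral>\<^sup>+x. f x \<partial>lborel) = 2 * (\<integral>\<^sup>+x. f x * indicator {0<..} x \<partial>lborel)"
proof -
  have "(\<integral>\<^sup>+x. f x \<partial>lborel) = (\<integral>\<^sup>+x. f x * indicator {0<..} x + f x * indicator {..0} x \<partial>lborel)"
    by (intro nn_integral_cong) (auto split: split_indicator)
  also have "\<dots> = (\<integral>\<^sup>+x. f x * indicator {0<..} x \<partial>lborel) + (\<integral>\<^sup>+x. f x * indicator {..0} x \<partial>lborel)"
    by (rule nn_integral_add) auto
  also have "(\<integral>\<^sup>+x. f x * indicator {..0} x \<partial>lborel)
      = (\<integral>\<^sup>+x. f (0 + (-1) * x) * indicator {..0} (0 + (-1) * x) \<partial>lborel)"
    by (subst nn_integral_real_affine[where c="-1" and t=0]) auto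
  also have "\<dots> = (\<integral>\<^sup>+x. f x * indicator {0<..} x \<partial>lborel)"
    by (simp, intro nn_integral_cong_AE AE_I[where N="{0}"]) (auto simp: even split: split_indicator)
  finally show ?thesis by (simp add: mult_2)
qed

text \<open>For \<open>a = 1 / (2\<eta>)\<close> this is the joint density of two independent \<open>N(0, \<eta>)\<close> variables,
  restricted to the outside of the unit disc.\<close>
definition disc_tail_density :: "real \<Rightarrow> real \<Rightarrow> real \<Rightarrow> real" where
  "disc_tail_density a x y = a / pi * exp (- a * (x\<^sup>2 + y\<^sup>2)) * (if 1 \<le> x\<^sup>2 + y\<^sup>2 then 1 else 0)"

lemma disc_tail_density_nonneg: "0 \<le> a \<Longrightarrow> 0 \<le> disc_tail_density a x y"
  by (simp add: disc_tail_density_def)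

lemma disc_tail_density_measurable[measurable (raw)]:
  assumes [measurable]: "f \<in> borel_measurable M" "g \<in> borel_measurable M"
  shows "(\<lambda>p. disc_tail_density a (f p) (g p)) \<in> borel_measurable M"
  unfolding disc_tail_density_def by measurable

lemma normal_density_mult_normal_density:
  fixes \<eta> :: real assumes "0 < \<eta>"
  shows "normal_density 0 (sqrt \<eta>) x * normal_density 0 (sqrt \<eta>) y
     = 1 / (2 * \<eta>) / pi * exp (- (1 / (2 * \<eta>)) * (x\<^sup>2 + y\<^sup>2))"
proof -
  have "sqrt (2 * pi * \<eta>) * sqrt (2 * pi * \<eta>) = 2 * pi * \<eta>"
    using assms by simp
  then show ?thesis
    using assms by (simp add: normal_density_def mult_exp_exp field_simps)
qed

text \<open>Along the ray \<open>y = t x\<close>, \<open>x > 0\<close>: the cut-off becomes \<open>x \<ge> 1 / sqrt (1 + t\<^sup>2)\<close>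
  and the integrand has an elementary antiderivative.\<close>
lemma nn_integral_disc_tail_density_ray:
  fixes a t :: real assumes a: "0 < a"
  shows "(\<integral>\<^sup>+x. ennreal (x * disc_tail_density a x (x * t)) * indicator {0<..} x \<partial>lborel)
     = ennreal (exp (- a) / (2 * pi * (1 + t\<^sup>2)))"
proof -
  define r where "r = 1 / sqrt (1 + t\<^sup>2)"
  define F where "F x = - exp (- (a * (1 + t\<^sup>2)) * x\<^sup>2) / (2 * pi * (1 + t\<^sup>2))" for x
  have s: "0 < 1 + t\<^sup>2" by (simp add: add_pos_nonneg)
  have r: "0 < r" using s by (simp add: r_def)
  have rr: "r\<^sup>2 * (1 + t\<^sup>2) = 1" using s by (simp add: r_def power_divide)
  have cutoff: "1 \<le> x\<^sup>2 + (x * t)\<^sup>2 \<longleftrightarrow> r \<le> x" if x: "0 < x" for x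
  proof -
    have "1 \<le> x\<^sup>2 + (x * t)\<^sup>2 \<longleftrightarrow> r\<^sup>2 * (1 + t\<^sup>2) \<le> x\<^sup>2 * (1 + t\<^sup>2)"
      using rr by (simp add: power_mult_distrib algebra_simps)
    also have "\<dots> \<longleftrightarrow> r \<le> x"
      using s r x by (simp add: power2_le_iff_abs_le abs_le_iff)
    finally show ?thesis .
  qed
  have "(\<integral>\<^sup>+x. ennreal (x * disc_tail_density a x (x * t)) * indicator {0<..} x \<partial>lborel)
     = (\<integral>\<^sup>+x. ennreal (a / pi * x * exp (- (a * (1 + t\<^sup>2)) * x\<^sup>2)) * indicator {r..} x \<partial>lborel)"
    using r cutoff
    by (intro nn_integral_cong)
       (auto simp: disc_tail_density_def indicator_def power_mult_distrib algebra_simps)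
  also have "\<dots> = ennreal (0 - F r)"
  proof (rule nn_integral_FTC_atLeast)
    fix x :: real assume "r \<le> x"
    then show "0 \<le> a / pi * x * exp (- (a * (1 + t\<^sup>2)) * x\<^sup>2)" using a r by simp
    have "(F has_real_derivative
        - (exp (- (a * (1 + t\<^sup>2)) * x\<^sup>2) * (- (a * (1 + t\<^sup>2)) * (2 * x))) / (2 * pi * (1 + t\<^sup>2))) (at x)"
      unfolding F_def by (auto intro!: derivative_eq_intros)
    moreover have "- (E * (- (a * c) * (2 * x))) / (2 * pi * c) = a / pi * x * E" if "0 < c" for E c
      using that by (simp add: field_simps)
    ultimately show "(F has_real_derivative a / pi * x * exp (- (a * (1 + t\<^sup>2)) * x\<^sup>2)) (at x)"
      using s by metis
  next
    have "((\<lambda>x. exp (- (a * (1 + t\<^sup>2)) * x\<^sup>2)) \<longlongrightarrow> 0) at_top"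
      by (intro filterlim_compose[OF exp_at_bot] filterlim_tendsto_neg_mult_at_bot[where c="- (a * (1 + t\<^sup>2))"])
         (use a s in \<open>auto intro!: filterlim_pow_at_top filterlim_ident\<close>)
    from tendsto_divide[OF tendsto_minus[OF this] tendsto_const, of "2 * pi * (1 + t\<^sup>2)"]
    show "(F \<longlongrightarrow> 0) at_top"
      unfolding F_def using s by simp
  qed measurable
  also have "0 - F r = exp (- a) / (2 * pi * (1 + t\<^sup>2))"
  proof -
    have "a * (1 + t\<^sup>2) * r\<^sup>2 = a" using rr by (metis mult.assoc mult.commute mult_1_right)
    then show ?thesis by (simp add: F_def)
  qed
  finally show ?thesis .
qed

lemma nn_integral_divide_one_plus_square_pos:
  fixes c :: real assumes "0 \<le> c"
  shows "(\<integral>\<^sup>+t. ennreal (c / (1 + t\<^sup>2)) * indicator {0<..} t \<partial>lborel) = ennreal (c * pi / 2)"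
proof -
  have "(\<integral>\<^sup>+t. ennreal (c / (1 + t\<^sup>2)) * indicator {0<..} t \<partial>lborel)
      = (\<integral>\<^sup>+t. ennreal (c / (1 + t\<^sup>2)) * indicator {0..} t \<partial>lborel)"
    by (intro nn_integral_cong_AE AE_I[where N="{0}"]) (auto split: split_indicator)
  also have "\<dots> = ennreal (c * (pi / 2) - c * arctan 0)"
  proof (rule nn_integral_FTC_atLeast)
    show "((\<lambda>t. c * arctan t) \<longlongrightarrow> c * (pi / 2)) at_top"
      by (intro tendsto_intros tendsto_arctan_at_top)
  qed (use assms in \<open>auto intro!: derivative_eq_intros simp: add_nonneg_eq_0_iff field_simps\<close>)
  finally show ?thesis by simp
qed

lemma nn_integral_disc_tail_density_quadrant:
  fixes a :: real assumes a: "0 < a"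
  shows "(\<integral>\<^sup>+x. (\<integral>\<^sup>+y. ennreal (disc_tail_density a x y) * indicator {0<..} y \<partial>lborel)
            * indicator {0<..} x \<partial>lborel)
     = ennreal (exp (- a) / 4)"
proof -
  have ray: "(\<integral>\<^sup>+y. ennreal (disc_tail_density a x y) * indicator {0<..} y \<partial>lborel)
      = (\<integral>\<^sup>+t. ennreal (x * disc_tail_density a x (x * t)) * indicator {0<..} t \<partial>lborel)"
    if x: "0 < x" for x
  proof -
    have "(\<integral>\<^sup>+y. ennreal (disc_tail_density a x y) * indicator {0<..} y \<partial>lborel)
      = x * (\<integral>\<^sup>+t. ennreal (disc_tail_density a x (0 + x * t)) * indicator {0<..} (0 + x * t) \<partial>lborel)"
      using x by (subst nn_integral_real_affine[where c=x and t=0]) auto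
    also have "\<dots> = (\<integral>\<^sup>+t. ennreal x * (ennreal (disc_tail_density a x (x * t)) * indicator {0<..} t) \<partial>lborel)"
      using x by (subst nn_integral_cmult) (auto simp: zero_less_mult_iff indicator_def)
    also have "\<dots> = (\<integral>\<^sup>+t. ennreal (x * disc_tail_density a x (x * t)) * indicator {0<..} t \<partial>lborel)"
      using x a by (intro nn_integral_cong) (simp add: ennreal_mult disc_tail_density_nonneg mult.assoc)
    finally show ?thesis .
  qed
  have "(\<integral>\<^sup>+x. (\<integral>\<^sup>+y. ennreal (disc_tail_density a x y) * indicator {0<..} y \<partial>lborel)
            * indicator {0<..} x \<partial>lborel)
     = (\<integral>\<^sup>+x. \<integral>\<^sup>+t. ennreal (x * disc_tail_density a x (x * t)) * indicator {0<..} t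
            * indicator {0<..} x \<partial>lborel \<partial>lborel)"
  proof (intro nn_integral_cong)
    fix x :: real
    show "(\<integral>\<^sup>+y. ennreal (disc_tail_density a x y) * indicator {0<..} y \<partial>lborel) * indicator {0<..} x
       = (\<integral>\<^sup>+t. ennreal (x * disc_tail_density a x (x * t)) * indicator {0<..} t
            * indicator {0<..} x \<partial>lborel)"
      using ray[of x] by (cases "0 < x") (simp_all add: indicator_def)
  qed
  also have "\<dots> = (\<integral>\<^sup>+t. \<integral>\<^sup>+x. ennreal (x * disc_tail_density a x (x * t)) * indicator {0<..} t
            * indicator {0<..} x \<partial>lborel \<partial>lborel)"
    by (rule lborel_pair.Fubini'[symmetric]) measurable
  also have "\<dots> = (\<integral>\<^sup>+t. ennreal (exp (- a) / (2 * pi) / (1 + t\<^sup>2)) * indicator {0<..} t \<partial>lborel)"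
  proof (intro nn_integral_cong)
    fix t :: real
    have "(\<integral>\<^sup>+x. ennreal (x * disc_tail_density a x (x * t)) * indicator {0<..} t * indicator {0<..} x \<partial>lborel)
       = (\<integral>\<^sup>+x. ennreal (x * disc_tail_density a x (x * t)) * indicator {0<..} x \<partial>lborel) * indicator {0<..} t"
      by (subst nn_integral_multc[symmetric]) (auto intro!: nn_integral_cong simp: mult_ac)
    then show "(\<integral>\<^sup>+x. ennreal (x * disc_tail_density a x (x * t)) * indicator {0<..} t * indicator {0<..} x \<partial>lborel)
       = ennreal (exp (- a) / (2 * pi) / (1 + t\<^sup>2)) * indicator {0<..} t"
      by (simp add: nn_integral_disc_tail_density_ray[OF a])
  qed
  also have "\<dots> = ennreal (exp (- a) / 4)"
    using nn_integral_divide_one_plus_square_pos[of "exp (- a) / (2 * pi)"] by simp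
  finally show ?thesis .
qed

lemma nn_integral_disc_tail_density:
  fixes a :: real assumes a: "0 < a"
  shows "(\<integral>\<^sup>+x. \<integral>\<^sup>+y. ennreal (disc_tail_density a x y) \<partial>lborel \<partial>lborel) = ennreal (exp (- a))"
proof -
  have even: "disc_tail_density a (- x) y = disc_tail_density a x y"
    "disc_tail_density a x (- y) = disc_tail_density a x y" for x y
    by (simp_all add: disc_tail_density_def)
  have "(\<integral>\<^sup>+x. \<integral>\<^sup>+y. ennreal (disc_tail_density a x y) \<partial>lborel \<partial>lborel)
      = (\<integral>\<^sup>+x. 2 * (\<integral>\<^sup>+y. ennreal (disc_tail_density a x y) * indicator {0<..} y \<partial>lborel) \<partial>lborel)"
    by (intro nn_integral_cong nn_integral_lborel_even) (auto simp: even)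
  also have "\<dots> = 2 * (2 * (\<integral>\<^sup>+x. (\<integral>\<^sup>+y. ennreal (disc_tail_density a x y) * indicator {0<..} y \<partial>lborel)
            * indicator {0<..} x \<partial>lborel))"
    by (subst nn_integral_cmult, measurable, subst nn_integral_lborel_even) (auto simp: even)
  also have "\<dots> = ennreal 4 * ennreal (exp (- a) / 4)"
    using nn_integral_disc_tail_density_quadrant[OF a] by (simp add: mult.assoc[symmetric])
  also have "\<dots> = ennreal (exp (- a))"
    by (simp add: ennreal_mult[symmetric] del: ennreal_numeral)
  finally show ?thesis .
qed

lemma sets_outside_unit_disc [measurable]:
  "{p. 1 \<le> (fst p)\<^sup>2 + (snd p)\<^sup>2} \<in> sets (borel \<Otimes>\<^sub>M (borel :: real measure))"
proof -
  have "{p \<in> space (borel \<Otimes>\<^sub>M borel). 1 \<le> (fst p)\<^sup>2 + (snd p :: real)\<^sup>2} \<in> sets (borel \<Otimes>\<^sub>M borel)"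
    by measurable
  then show ?thesis by (simp add: space_pair_measure)
qed

lemma emeasure_gauss_pair_outside_unit_disc:
  fixes \<eta> :: real assumes \<eta>: "0 < \<eta>"
  shows "emeasure (gauss \<eta> \<Otimes>\<^sub>M gauss \<eta>) {p. 1 \<le> (fst p)\<^sup>2 + (snd p)\<^sup>2} = ennreal (exp (- 1 / (2 * \<eta>)))"
proof -
  let ?f = "\<lambda>x. ennreal (normal_density 0 (sqrt \<eta>) x)"
  have gauss: "gauss \<eta> = density lborel ?f" using \<eta> by (simp add: gauss_def)
  have "sigma_finite_measure (density lborel ?f)"
    using \<eta> by (intro prob_space_imp_sigma_finite prob_space_normal_density) simp
  then have product: "gauss \<eta> \<Otimes>\<^sub>M gauss \<eta> = density (lborel \<Otimes>\<^sub>M lborel) (\<lambda>(x, y). ?f x * ?f y)"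
    unfolding gauss by (intro pair_measure_density) (auto intro: lborel.sigma_finite_measure_axioms)
  have "emeasure (gauss \<eta> \<Otimes>\<^sub>M gauss \<eta>) {p. 1 \<le> (fst p)\<^sup>2 + (snd p)\<^sup>2}
      = (\<integral>\<^sup>+p. ennreal (disc_tail_density (1 / (2 * \<eta>)) (fst p) (snd p)) \<partial>(lborel \<Otimes>\<^sub>M lborel))"
    unfolding product using \<eta>
    by (subst emeasure_density) (auto intro!: nn_integral_cong simp: disc_tail_density_def
        normal_density_mult_normal_density ennreal_mult[symmetric] indicator_def)
  also have "\<dots> = (\<integral>\<^sup>+x. \<integral>\<^sup>+y. ennreal (disc_tail_density (1 / (2 * \<eta>)) x y) \<partial>lborel \<partial>lborel)"
  proof -
    have "(\<lambda>p. ennreal (disc_tail_density (1 / (2 * \<eta>)) (fst p) (snd p))) \<in> borel_measurable (lborel \<Otimes>\<^sub>M lborel)"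
      by measurable
    from lborel.nn_integral_fst[OF this] show ?thesis by simp
  qed
  also have "\<dots> = ennreal (exp (- 1 / (2 * \<eta>)))"
    using \<eta> by (simp add: nn_integral_disc_tail_density)
  finally show ?thesis .
qed

lemma (in prob_space) indep_var_of_indep_vars:
  assumes "indep_vars M' X I" and "a \<in> I" "b \<in> I" "a \<noteq> b"
  shows "indep_var (M' a) (X a) (M' b) (X b)"
proof -
  have "indep_var (PiM {a} M') (\<lambda>\<omega>. restrict (\<lambda>i. X i \<omega>) {a}) (PiM {b} M') (\<lambda>\<omega>. restrict (\<lambda>i. X i \<omega>) {b})"
    using assms by (intro indep_var_restrict) auto
  then have "indep_var (M' a) ((\<lambda>f. f a) \<circ> (\<lambda>\<omega>. restrict (\<lambda>i. X i \<omega>) {a}))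
      (M' b) ((\<lambda>f. f b) \<circ> (\<lambda>\<omega>. restrict (\<lambda>i. X i \<omega>) {b}))"
    by (rule indep_var_compose) measurable
  then show ?thesis by (simp add: comp_def)
qed

text \<open>Stated with an upper bound \<open>b\<close> on the variance so as to cover \<open>\<eta> = 0\<close>, where \<open>gauss 0\<close> is a
  point mass and \<open>exp (- 1 / (2 * \<eta>))\<close> would be the junk value \<open>1\<close>.\<close>
lemma (in prob_space) prob_gauss_pair_outside_unit_disc_le:
  fixes X Y :: "'a \<Rightarrow> real"
  assumes indep: "indep_var borel X borel Y"
    and X: "distr M borel X = gauss \<eta>" and Y: "distr M borel Y = gauss \<eta>"
    and \<eta>: "0 \<le> \<eta>" "\<eta> \<le> b"
  shows "prob {\<omega> \<in> space M. 1 \<le> (X \<omega>)\<^sup>2 + (Y \<omega>)\<^sup>2} \<le> exp (- 1 / (2 * b))"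
proof (cases "\<eta> = 0")
  case True
  have [measurable]: "random_variable borel X" "random_variable borel Y"
    using indep by (simp_all add: indep_var_distribution_eq)
  have null: "prob {\<omega> \<in> space M. V \<omega> \<noteq> 0} = 0"
    if [measurable]: "random_variable borel V" and "distr M borel V = gauss \<eta>" for V :: "'a \<Rightarrow> real"
  proof -
    have "emeasure M {\<omega> \<in> space M. V \<omega> \<noteq> 0} = emeasure (distr M borel V) (UNIV - {0})"
      by (subst emeasure_distr) (auto intro!: arg_cong[where f="emeasure M"])
    then show ?thesis using that True by (simp add: gauss_def emeasure_eq_measure)
  qed
  have "prob {\<omega> \<in> space M. 1 \<le> (X \<omega>)\<^sup>2 + (Y \<omega>)\<^sup>2}
      \<le> prob ({\<omega> \<in> space M. X \<omega> \<noteq> 0} \<union> {\<omega> \<in> space M. Y \<omega> \<noteq> 0})"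
    by (intro finite_measure_mono) auto
  also have "\<dots> \<le> prob {\<omega> \<in> space M. X \<omega> \<noteq> 0} + prob {\<omega> \<in> space M. Y \<omega> \<noteq> 0}"
    by (intro measure_Un_le) measurable
  also have "\<dots> = 0"
    using null X Y by simp
  finally show ?thesis by (rule order_trans) simp
next
  case False
  then have \<eta>_pos: "0 < \<eta>" using \<eta> by simp
  from indep have [measurable]: "random_variable borel X" "random_variable borel Y"
    and product: "distr M borel X \<Otimes>\<^sub>M distr M borel Y = distr M (borel \<Otimes>\<^sub>M borel) (\<lambda>\<omega>. (X \<omega>, Y \<omega>))"
    by (simp_all add: indep_var_distribution_eq)
  have "emeasure M {\<omega> \<in> space M. 1 \<le> (X \<omega>)\<^sup>2 + (Y \<omega>)\<^sup>2}
      = emeasure (distr M (borel \<Otimes>\<^sub>M borel) (\<lambda>\<omega>. (X \<omega>, Y \<omega>))) {p. 1 \<le> (fst p)\<^sup>2 + (snd p)\<^sup>2}"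
    by (subst emeasure_distr) (auto intro!: arg_cong[where f="emeasure M"])
  also have "\<dots> = ennreal (exp (- 1 / (2 * \<eta>)))"
    using emeasure_gauss_pair_outside_unit_disc[OF \<eta>_pos] by (simp add: product[symmetric] X Y)
  finally have "prob {\<omega> \<in> space M. 1 \<le> (X \<omega>)\<^sup>2 + (Y \<omega>)\<^sup>2} = exp (- 1 / (2 * \<eta>))"
    by (simp add: emeasure_eq_measure)
  also have "\<dots> \<le> exp (- 1 / (2 * b))"
    using \<eta>_pos \<eta> by (simp add: frac_le)
  finally show ?thesis .
qed

lemma (in prob_space) prob_ge_one_minus_union_bound:
  fixes b :: real
  assumes "S \<in> events" "finite K" "\<And>x. x \<in> K \<Longrightarrow> B x \<in> events"
    and "\<And>x. x \<in> K \<Longrightarrow> prob (B x) \<le> b" and "space M - S \<subseteq> (\<Union>x\<in>K. B x)"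
  shows "1 - card K * b \<le> prob S"
proof -
  have "prob (space M - S) \<le> prob (\<Union>x\<in>K. B x)"
    using assms by (intro finite_measure_mono) auto
  also have "\<dots> \<le> (\<Sum>x\<in>K. prob (B x))"
    using assms by (intro measure_UNION_le) auto
  also have "\<dots> \<le> card K * b"
    using sum_mono[of K "\<lambda>x. prob (B x)" "\<lambda>_. b"] assms by simp
  finally show ?thesis
    using prob_compl[OF assms(1)] by simp
qed

section \<open>Permutation matrices and the trace objective\<close>

definition permmat :: "nat \<Rightarrow> (nat \<Rightarrow> nat) \<Rightarrow> nat \<Rightarrow> nat \<Rightarrow> real" where
  "permmat m \<sigma> = (\<lambda>p q. if p < m \<and> q < m \<and> \<sigma> p = q then 1 else 0)"

lemma perm_mats_iff: "P \<in> perm_mats m \<longleftrightarrow> (\<exists>\<sigma>. \<sigma> permutes {..<m} \<and> P = permmat m \<sigma>)"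
  by (simp add: perm_mats_def permmat_def)

lemma permutes_lessThan_less: "\<sigma> permutes {..<m} \<Longrightarrow> k < m \<Longrightarrow> \<sigma> k < m"
  using permutes_in_image[of \<sigma> "{..<m}" k] by simp

lemma mtrace_mmult_mtransp_permmat:
  assumes \<sigma>: "\<sigma> permutes {..<m}"
  shows "mtrace m (mmult m (mtransp (permmat m \<sigma>)) T) = (\<Sum>k<m. T k (\<sigma> k))"
proof -
  have "mtrace m (mmult m (mtransp (permmat m \<sigma>)) T) = (\<Sum>p<m. \<Sum>k<m. if \<sigma> k = p then T k p else 0)"
    unfolding mtrace_def mmult_def mtransp_def permmat_def by (intro sum.cong refl) auto
  also have "\<dots> = (\<Sum>k<m. \<Sum>p<m. if \<sigma> k = p then T k p else 0)"
    by (rule sum.swap)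
  also have "\<dots> = (\<Sum>k<m. T k (\<sigma> k))"
    using \<sigma> by (intro sum.cong refl) (simp add: sum.delta permutes_lessThan_less)
  finally show ?thesis .
qed

lemma mtrace_mmult_mtransp_swap:
  "mtrace m (mmult m Q (mtransp T)) = mtrace m (mmult m (mtransp Q) T)"
  unfolding mtrace_def mmult_def mtransp_def by (subst sum.swap) (simp add: mult.commute)

lemma mtransp_mtransp [simp]: "mtransp (mtransp X) = X"
  by (simp add: mtransp_def)

lemma mtransp_mmult_mtransp: "mtransp (mmult m (mtransp X) Y) = mmult m (mtransp Y) X"
  by (simp add: mtransp_def mmult_def mult.commute)

lemma mtransp_permmat:
  assumes "\<sigma> permutes {..<m}"
  shows "mtransp (permmat m \<sigma>) = permmat m (inv \<sigma>)"
  using assms by (auto simp: fun_eq_iff mtransp_def permmat_def permutes_inverses permutes_inv_eq)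

lemma mtransp_perm_mats:
  assumes "P \<in> perm_mats m"
  shows "mtransp P \<in> perm_mats m"
proof -
  from assms obtain \<sigma> where "\<sigma> permutes {..<m}" "P = permmat m \<sigma>"
    by (auto simp: perm_mats_iff)
  then show ?thesis
    unfolding perm_mats_iff by (intro exI[of _ "inv \<sigma>"]) (simp add: mtransp_permmat permutes_inv)
qed

lemma mmult_mtransp_permmat:
  assumes \<sigma>: "\<sigma> permutes {..<m}" and \<tau>: "\<tau> permutes {..<m}"
  shows "mmult m (mtransp (permmat m \<sigma>)) (permmat m \<tau>) = permmat m (\<tau> \<circ> inv \<sigma>)"
proof (intro ext)
  fix p q
  have inv: "inv \<sigma> permutes {..<m}" using \<sigma> by (rule permutes_inv)
  have outside: "inv \<sigma> p = p" if "\<not> p < m"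
    using permutes_not_in[OF inv] that by simp
  have "mmult m (mtransp (permmat m \<sigma>)) (permmat m \<tau>) p q
      = (\<Sum>k<m. if k = inv \<sigma> p then permmat m \<tau> k q else 0)"
    unfolding mmult_def mtransp_permmat[OF \<sigma>]
    by (intro sum.cong refl) (auto simp: permmat_def outside)
  also have "\<dots> = permmat m (\<tau> \<circ> inv \<sigma>) p q"
    using permutes_lessThan_less[OF inv, of p]
    by (cases "p < m") (auto simp: sum.delta permmat_def outside)
  finally show "mmult m (mtransp (permmat m \<sigma>)) (permmat m \<tau>) p q = permmat m (\<tau> \<circ> inv \<sigma>) p q" .
qed

lemma hatT_permmat:
  assumes "A i \<in> perm_mats m" "A j \<in> perm_mats m"
  shows "\<exists>\<rho>. \<rho> permutes {..<m} \<and> hatT m A i j = permmat m \<rho>"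
proof -
  from assms obtain \<sigma> \<tau> where \<sigma>: "\<sigma> permutes {..<m}" "A i = permmat m \<sigma>"
    and \<tau>: "\<tau> permutes {..<m}" "A j = permmat m \<tau>"
    by (auto simp: perm_mats_iff)
  then show ?thesis
    unfolding hatT_def
    by (intro exI[of _ "\<tau> \<circ> inv \<sigma>"]) (simp add: mmult_mtransp_permmat permutes_compose permutes_inv)
qed

text \<open>Any other permutation loses weakly in every row and strictly in a row where it differs from
  \<open>\<tau>\<close>.\<close>
lemma unique_maximizer_permmatI:
  assumes \<tau>: "\<tau> permutes {..<m}"
    and dominant: "\<And>k q. k < m \<Longrightarrow> q < m \<Longrightarrow> q \<noteq> \<tau> k \<Longrightarrow> T k q < T k (\<tau> k)"
  shows "unique_maximizer m T (permmat m \<tau>)"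
  unfolding unique_maximizer_def
proof (intro conjI ballI impI)
  show "permmat m \<tau> \<in> perm_mats m" using \<tau> by (auto simp: perm_mats_iff)
  fix P assume "P \<in> perm_mats m" and "P \<noteq> permmat m \<tau>"
  then obtain \<sigma> where \<sigma>: "\<sigma> permutes {..<m}" and P: "P = permmat m \<sigma>" and "\<sigma> \<noteq> \<tau>"
    by (auto simp: perm_mats_iff)
  then obtain k where k: "\<sigma> k \<noteq> \<tau> k" by (auto simp: fun_eq_iff)
  then have "k < m" using permutes_not_in[OF \<sigma>] permutes_not_in[OF \<tau>] by fastforce
  have "(\<Sum>l<m. T l (\<sigma> l)) < (\<Sum>l<m. T l (\<tau> l))"
  proof (rule sum_strict_mono_ex1)
    show "\<forall>l\<in>{..<m}. T l (\<sigma> l) \<le> T l (\<tau> l)"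
    proof
      fix l assume "l \<in> {..<m}"
      then show "T l (\<sigma> l) \<le> T l (\<tau> l)"
        using dominant[of l "\<sigma> l"] permutes_lessThan_less[OF \<sigma>, of l] by (cases "\<sigma> l = \<tau> l") auto
    qed
    show "\<exists>l\<in>{..<m}. T l (\<sigma> l) < T l (\<tau> l)"
      using dominant[OF \<open>k < m\<close> permutes_lessThan_less[OF \<sigma> \<open>k < m\<close>] k] \<open>k < m\<close> by auto
  qed simp
  then show "mtrace m (mmult m (mtransp P) T) < mtrace m (mmult m (mtransp (permmat m \<tau>)) T)"
    using P by (simp add: mtrace_mmult_mtransp_permmat \<sigma> \<tau>)
qed

lemma unique_maximizer_mtransp:
  assumes "unique_maximizer m T P0"
  shows "unique_maximizer m (mtransp T) (mtransp P0)"
  unfolding unique_maximizer_def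
proof (intro conjI ballI impI)
  show "mtransp P0 \<in> perm_mats m" using assms by (simp add: unique_maximizer_def mtransp_perm_mats)
  fix P assume "P \<in> perm_mats m" "P \<noteq> mtransp P0"
  then have "mtransp P \<in> perm_mats m" "mtransp P \<noteq> P0"
    by (auto simp: mtransp_perm_mats)
  with assms have "mtrace m (mmult m (mtransp (mtransp P)) T) < mtrace m (mmult m (mtransp P0) T)"
    unfolding unique_maximizer_def by blast
  then show "mtrace m (mmult m (mtransp P) (mtransp T)) < mtrace m (mmult m (mtransp (mtransp P0)) (mtransp T))"
    by (simp add: mtrace_mmult_mtransp_swap)
qed

lemma pred_unique_maximizer:
  assumes "\<And>p q. p < m \<Longrightarrow> q < m \<Longrightarrow> (\<lambda>\<omega>. T \<omega> p q) \<in> borel_measurable N"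
  shows "Measurable.pred N (\<lambda>\<omega>. unique_maximizer m (T \<omega>) P0)"
proof -
  have "finite (perm_mats m)"
    by (rule finite_subset[of _ "permmat m ` {\<sigma>. \<sigma> permutes {..<m}}"])
       (auto simp: perm_mats_iff finite_permutations)
  moreover have "(\<lambda>\<omega>. mtrace m (mmult m (mtransp P) (T \<omega>))) \<in> borel_measurable N" for P
    unfolding mtrace_def mmult_def using assms by (auto intro!: borel_measurable_sum borel_measurable_times)
  ultimately show ?thesis
    unfolding unique_maximizer_def by (intro pred_intros_finite pred_intros_logic) auto
qed

section \<open>The noise model\<close>

lemma unique_maximizer_noisyT_upper:
  assumes \<rho>: "\<rho> permutes {..<m}" and hat: "hatT m A i j = permmat m \<rho>"
    and small: "\<And>k q. k < m \<Longrightarrow> q < m \<Longrightarrow> q \<noteq> \<rho> k \<Longrightarrow> (z i j k (\<rho> k))\<^sup>2 + (z i j k q)\<^sup>2 < 1"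
  shows "unique_maximizer m (noisyT_upper m A z i j) (hatT m A i j)"
  unfolding hat
proof (rule unique_maximizer_permmatI[OF \<rho>])
  fix k q assume "k < m" "q < m" "q \<noteq> \<rho> k"
  then show "noisyT_upper m A z i j k q < noisyT_upper m A z i j k (\<rho> k)"
    using small[of k q] permutes_lessThan_less[OF \<rho>, of k]
    by (simp add: noisyT_upper_def hat permmat_def)
qed

lemma ex_hatT_permmat:
  assumes "\<And>i. i < n \<Longrightarrow> A i \<in> perm_mats m"
  shows "\<exists>\<rho>. \<forall>i<n. \<forall>j<n. \<rho> i j permutes {..<m} \<and> hatT m A i j = permmat m (\<rho> i j)"
proof -
  have "\<exists>\<rho>. \<rho> permutes {..<m} \<and> hatT m A i j = permmat m \<rho>" if "i < n" "j < n" for i j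
    using assms that by (intro hatT_permmat) auto
  then show ?thesis by metis
qed

lemma unique_maximizers_noisyT:
  assumes \<rho>: "\<And>i j. i < n \<Longrightarrow> j < n \<Longrightarrow> \<rho> i j permutes {..<m} \<and> hatT m A i j = permmat m (\<rho> i j)"
    and small: "\<And>i j k q. i < j \<Longrightarrow> j < n \<Longrightarrow> k < m \<Longrightarrow> q < m \<Longrightarrow> q \<noteq> \<rho> i j k \<Longrightarrow>
      (z i j k (\<rho> i j k))\<^sup>2 + (z i j k q)\<^sup>2 < 1"
  shows "\<forall>i<n. \<forall>j<n. i \<noteq> j \<longrightarrow> unique_maximizer m (noisyT m A z i j) (hatT m A i j)"
proof (intro allI impI)
  fix i j assume "i < n" "j < n" "i \<noteq> j"
  show "unique_maximizer m (noisyT m A z i j) (hatT m A i j)"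
  proof (cases "i < j")
    case True
    have "unique_maximizer m (noisyT_upper m A z i j) (hatT m A i j)"
      using assms True \<open>i < n\<close> \<open>j < n\<close> by (intro unique_maximizer_noisyT_upper[of "\<rho> i j"]) auto
    then show ?thesis
      using True by (simp add: noisyT_def)
  next
    case False
    then have "j < i" using \<open>i \<noteq> j\<close> by simp
    then have "unique_maximizer m (noisyT_upper m A z j i) (hatT m A j i)"
      using assms \<open>i < n\<close> \<open>j < n\<close> by (intro unique_maximizer_noisyT_upper[of "\<rho> j i"]) auto
    then have "unique_maximizer m (mtransp (noisyT_upper m A z j i)) (mtransp (hatT m A j i))"
      by (rule unique_maximizer_mtransp)
    then show ?thesis
      using False by (simp add: noisyT_def hatT_def mtransp_mmult_mtransp)
  qed
qed

lemma pred_unique_maximizers_noisyT: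
  assumes Z: "\<And>i j p q. i < j \<Longrightarrow> j < n \<Longrightarrow> p < m \<Longrightarrow> q < m \<Longrightarrow> Z i j p q \<in> borel_measurable M"
  shows "Measurable.pred M (\<lambda>\<omega>. \<forall>i<n. \<forall>j<n. i \<noteq> j \<longrightarrow>
    unique_maximizer m (noisyT m A (\<lambda>i j p q. Z i j p q \<omega>) i j) (hatT m A i j))"
proof -
  have "Measurable.pred M (\<lambda>\<omega>. unique_maximizer m (noisyT m A (\<lambda>i j p q. Z i j p q \<omega>) i j) (hatT m A i j))"
    if "i < n" "j < n" "i \<noteq> j" for i j
  proof (rule pred_unique_maximizer)
    fix p q assume "p < m" "q < m"
    show "(\<lambda>\<omega>. noisyT m A (\<lambda>i j p q. Z i j p q \<omega>) i j p q) \<in> borel_measurable M"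
    proof (cases "i < j")
      case True
      with Z that \<open>p < m\<close> \<open>q < m\<close> have [measurable]: "Z i j p q \<in> borel_measurable M" by simp
      from True show ?thesis unfolding noisyT_def noisyT_upper_def by simp measurable
    next
      case False
      with Z that \<open>p < m\<close> \<open>q < m\<close> have [measurable]: "Z j i q p \<in> borel_measurable M" by simp
      from False show ?thesis unfolding noisyT_def noisyT_upper_def mtransp_def by simp measurable
    qed
  qed
  then show ?thesis
    by (intro pred_intros_countable pred_intros_imp') blast
qed

lemma (in prob_space) prob_unique_maximizers_noisyT_ge:
  fixes n m :: nat and Z :: "nat \<Rightarrow> nat \<Rightarrow> nat \<Rightarrow> nat \<Rightarrow> 'a \<Rightarrow> real" and \<beta> :: real
  defines "I \<equiv> {(i, j, p, q). i < j \<and> j < n \<and> p < m \<and> q < m}"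
  assumes A: "\<And>i. i < n \<Longrightarrow> A i \<in> perm_mats m"
    and indep: "indep_vars (\<lambda>_. borel) (\<lambda>(i, j, p, q). Z i j p q) I"
    and distr: "\<And>i j p q. (i, j, p, q) \<in> I \<Longrightarrow> distr M borel (Z i j p q) = gauss (\<eta> i j)"
    and \<eta>: "\<And>i j. i < j \<Longrightarrow> j < n \<Longrightarrow> 0 \<le> \<eta> i j \<and> \<eta> i j \<le> \<beta>"
  shows "1 - real n * real n * (real m * real m) * exp (- 1 / (2 * \<beta>))
    \<le> prob {\<omega> \<in> space M. \<forall>i<n. \<forall>j<n. i \<noteq> j \<longrightarrow>
            unique_maximizer m (noisyT m A (\<lambda>i j p q. Z i j p q \<omega>) i j) (hatT m A i j)}"
    (is "_ \<le> prob ?S")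
proof -
  from ex_hatT_permmat[OF A] obtain \<rho>
    where \<rho>: "\<forall>i<n. \<forall>j<n. \<rho> i j permutes {..<m} \<and> hatT m A i j = permmat m (\<rho> i j)" ..
  define K where "K = {(i, j, k, q). i < j \<and> j < n \<and> k < m \<and> q < m \<and> q \<noteq> \<rho> i j k}"
  define bad where "bad = (\<lambda>(i, j, k, q). {\<omega> \<in> space M. 1 \<le> (Z i j k (\<rho> i j k) \<omega>)\<^sup>2 + (Z i j k q \<omega>)\<^sup>2})"
  have Z[measurable]: "Z i j p q \<in> borel_measurable M" if "(i, j, p, q) \<in> I" for i j p q
    using indep that unfolding indep_vars_def by auto
  have K_I: "(i, j, k, \<rho> i j k) \<in> I" "(i, j, k, q) \<in> I" "(i, j, k, \<rho> i j k) \<noteq> (i, j, k, q)"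
    if "(i, j, k, q) \<in> K" for i j k q
    using that permutes_lessThan_less[OF \<rho>[rule_format, THEN conjunct1]] by (auto simp: K_def I_def)
  have "card K \<le> card ({..<n} \<times> {..<n} \<times> {..<m} \<times> {..<m})"
    by (intro card_mono) (auto simp: K_def)
  then have "1 - real n * real n * (real m * real m) * exp (- 1 / (2 * \<beta>)) \<le> 1 - card K * exp (- 1 / (2 * \<beta>))"
    by (intro diff_left_mono mult_right_mono) (auto simp: card_cartesian_product simp flip: of_nat_mult)
  also have "\<dots> \<le> prob ?S"
  proof (rule prob_ge_one_minus_union_bound)
    have "Measurable.pred M (\<lambda>\<omega>. \<forall>i<n. \<forall>j<n. i \<noteq> j \<longrightarrow>
        unique_maximizer m (noisyT m A (\<lambda>i j p q. Z i j p q \<omega>) i j) (hatT m A i j))"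
      by (rule pred_unique_maximizers_noisyT, rule Z) (simp add: I_def)
    then show "?S \<in> events" by (simp only: pred_def)
    show "finite K"
      by (rule finite_subset[of _ "{..<n} \<times> {..<n} \<times> {..<m} \<times> {..<m}"]) (auto simp: K_def)
    fix x assume "x \<in> K"
    then obtain i j k q where x: "x = (i, j, k, q)" "(i, j, k, q) \<in> K" by (cases x) auto
    then show "bad x \<in> events"
      using K_I by (auto simp: bad_def)
    show "prob (bad x) \<le> exp (- 1 / (2 * \<beta>))"
      using prob_gauss_pair_outside_unit_disc_le[OF indep_var_of_indep_vars[OF indep K_I[OF x(2)]]]
        distr K_I[OF x(2)] \<eta> x(2) by (simp add: bad_def x(1) K_def)
  next
    show "space M - ?S \<subseteq> (\<Union>x\<in>K. bad x)"
    proof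
      fix \<omega> assume \<omega>: "\<omega> \<in> space M - ?S"
      have "\<not> (\<forall>i j k q. i < j \<longrightarrow> j < n \<longrightarrow> k < m \<longrightarrow> q < m \<longrightarrow> q \<noteq> \<rho> i j k \<longrightarrow>
          (Z i j k (\<rho> i j k) \<omega>)\<^sup>2 + (Z i j k q \<omega>)\<^sup>2 < 1)"
        using \<omega> unique_maximizers_noisyT[where n=n and z="\<lambda>i j p q. Z i j p q \<omega>", OF \<rho>[rule_format]] by auto
      then show "\<omega> \<in> (\<Union>x\<in>K. bad x)"
        using \<omega> by (auto simp: K_def bad_def not_less)
    qed
  qed
  finally show ?thesis .
qed

lemma exp_noise_level_le_powr:
  fixes x c :: real assumes "1 < x" "0 < c"
  shows "exp (- 1 / (2 * (1 / (2 * c * ln x + 2)))) \<le> x powr (- c)"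
proof -
  have "exp (- 1 / (2 * (1 / (2 * c * ln x + 2)))) = exp (- (c * ln x) - 1)"
    by (simp add: field_simps)
  also have "\<dots> \<le> exp (- (c * ln x))" by simp
  also have "\<dots> = x powr (- c)" using assms by (simp add: powr_def)
  finally show ?thesis .
qed

lemma pair_count_le_powr:
  fixes x \<gamma> \<delta> :: real
  assumes "1 < x" "0 \<le> \<gamma>" "real n \<le> x powr \<gamma>"
  shows "real n * real n * (x * x) * x powr (- (2 + 4 * \<gamma> + \<delta>)) \<le> x powr (- \<delta>)"
proof -
  have "real n * real n * (x * x) * x powr (- (2 + 4 * \<gamma> + \<delta>))
      \<le> x powr \<gamma> * x powr \<gamma> * x powr 2 * x powr (- (2 + 4 * \<gamma> + \<delta>))"
    using assms by (intro mult_right_mono mult_mono) (auto simp: powr_numeral power2_eq_square)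
  also have "\<dots> = x powr (- 2 * \<gamma> - \<delta>)"
    by (simp add: powr_add[symmetric])
  also have "\<dots> \<le> x powr (- \<delta>)"
    using assms by (intro powr_mono) auto
  finally show ?thesis .
qed

theorem mainTheorem5:
  fixes M :: "'a measure" and n m :: nat and \<gamma> \<delta> :: real
    and A :: "nat \<Rightarrow> nat \<Rightarrow> nat \<Rightarrow> real"
    and Z :: "nat \<Rightarrow> nat \<Rightarrow> nat \<Rightarrow> nat \<Rightarrow> 'a \<Rightarrow> real"
    and \<eta> :: "nat \<Rightarrow> nat \<Rightarrow> real"
  defines "I \<equiv> {(i, j, p, q). i < j \<and> j < n \<and> p < m \<and> q < m}"
  assumes "prob_space M"
    and A: "\<And>i. i < n \<Longrightarrow> A i \<in> perm_mats m"
    and indep: "prob_space.indep_vars M (\<lambda>_. borel) (\<lambda>(i, j, p, q). Z i j p q) I"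
    and distr: "\<And>i j p q. (i, j, p, q) \<in> I \<Longrightarrow> distr M borel (Z i j p q) = gauss (\<eta> i j)"
    and \<gamma>: "\<gamma> > 0" and \<delta>: "\<delta> > 0"
    and n_le: "real n \<le> real m powr \<gamma>"
    and m_ge: "real m \<ge> 2 powr (2 / (4 * \<gamma> + \<delta>))"
    and \<eta>_nonneg: "\<And>i j. i < j \<Longrightarrow> j < n \<Longrightarrow> \<eta> i j \<ge> 0"
    and \<eta>_le: "\<And>i j. i < j \<Longrightarrow> j < n \<Longrightarrow>
       \<eta> i j \<le> min (1/10) (1 / (2 * (2 + 4 * \<gamma> + \<delta>) * ln (real m) + 2))"
  shows "measure M {\<omega> \<in> space M. \<forall>i<n. \<forall>j<n. i \<noteq> j \<longrightarrow>
            unique_maximizer m (noisyT m A (\<lambda>i j p q. Z i j p q \<omega>) i j) (hatT m A i j)}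
         \<ge> 1 - real m powr (- \<delta>)"
proof -
  note I_def = assms(1)
  interpret prob_space M by fact
  define c where "c = 2 + 4 * \<gamma> + \<delta>"
  have "1 < (2::real) powr (2 / (4 * \<gamma> + \<delta>))"
    using \<gamma> \<delta> by (intro gr_one_powr) auto
  with m_ge have m: "1 < real m" by linarith
  have "1 - real m powr (- \<delta>)
      \<le> 1 - real n * real n * (real m * real m) * exp (- 1 / (2 * (1 / (2 * c * ln (real m) + 2))))"
  proof -
    have "exp (- 1 / (2 * (1 / (2 * c * ln (real m) + 2)))) \<le> real m powr (- c)"
      using m \<gamma> \<delta> by (intro exp_noise_level_le_powr) (auto simp: c_def)
    then have "real n * real n * (real m * real m) * exp (- 1 / (2 * (1 / (2 * c * ln (real m) + 2))))
        \<le> real n * real n * (real m * real m) * real m powr (- c)"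
      by (intro mult_left_mono) auto
    also have "\<dots> \<le> real m powr (- \<delta>)"
      unfolding c_def using m \<gamma> n_le by (intro pair_count_le_powr) auto
    finally show ?thesis by simp
  qed
  also have "\<dots> \<le> measure M {\<omega> \<in> space M. \<forall>i<n. \<forall>j<n. i \<noteq> j \<longrightarrow>
            unique_maximizer m (noisyT m A (\<lambda>i j p q. Z i j p q \<omega>) i j) (hatT m A i j)}"
    using A indep distr \<eta>_nonneg \<eta>_le unfolding I_def c_def
    by (intro prob_unique_maximizers_noisyT_ge) auto
  finally show ?thesis .
qed

end
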